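(* Let $n\ge 1$, $\sigma>0$, $\lambda>0$, covariates $X=(X_1,\dots,X_n)\in[0,1]^n$ and responses $\mathbf y\in\mathbb R^n$ be given. Let $K:[0,1]^2\to\mathbb R$ be a continuous, symmetric, positive definite kernel with $K\in C^2([0,1]\times[0,1])$, and suppose $\widehat\sigma^2_{f'}(x)>0$ for every $x\in[0,1]$. Then there is a constant $C$ not depending on $t$ such that for all $t\in[0,1]$, $$\ell(t)=C\,\frac{1}{\sqrt{\widehat\sigma^2_{f'}(t)/K_{11}(t,t)}}\exp\Big\{-\frac{\widehat\mu_{f'}(t)^2}{2\widehat\sigma^2_{f'}(t)}\Big\}.$$ Consequently, for a prior density $\pi(t)$ on $[0,1]$, the posterior density of $t$ satisfies $$\pi_n(t\mid X,\mathbf y)\propto \frac{1}{\sqrt{\widehat\sigma^2_{f'}(t)/K_{11}(t,t)}}\exp\Big(-\frac{\widehat\mu_{f'}(t)^2}{2\widehat\sigma^2_{f'}(t)}\Big)\pi(t).$$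
   Context: Notation: $K_{jl}(x,x')=\partial^{j+l}K(x,x')/\partial x^j\partial x'^l$; $K(X,X)=(K(X_i,X_j))_{i,j=1}^n$; $K_{10}(x,X)=(K_{10}(x,X_1),\dots,K_{10}(x,X_n))$ (row vector) and $K_{01}(X,x)=K_{10}(x,X)^T$; $I_n$ is the $n\times n$ identity. Define $\widehat\mu_{f'}(x)=K_{10}(x,X)[K(X,X)+n\lambda I_n]^{-1}\mathbf y$ and $\widehat\sigma^2_{f'}(x)=\sigma^2(n\lambda)^{-1}\{K_{11}(x,x)-K_{10}(x,X)[K(X,X)+n\lambda I_n]^{-1}K_{01}(X,x)\}$ (posterior mean and variance of $f'$ under the unconstrained prior $f\sim \mathrm{GP}(0,\sigma^2(n\lambda)^{-1}K)$ in the model $y_i=f(X_i)+\epsilon_i$, $\epsilon_i\sim N(0,\sigma^2)$ i.i.d.). Constrained prior: given $t\in[0,1]$, $f\sim\mathrm{GP}(0,k_t)$ with $k_t(x,x')=\sigma^2(n\lambda)^{-1}\{K(x,x')-K_{01}(x,t)K_{11}(t,t)^{-1}K_{10}(t,x')\}$ (the GP conditioned on $f'(t)=0$), and $t\sim\pi$. Integrating out $f$ gives $\mathbf y\mid X,t\sim N(0,\Sigma_t)$ with $\Sigma_t=\sigma^2(n\lambda)^{-1}\{K(X,X)-K_{01}(X,t)K_{11}(t,t)^{-1}K_{10}(t,X)\}+\sigma^2 I_n$; the marginal likelihood $\ell(t)$ is the $N(0,\Sigma_t)$ density evaluated at $\mathbf y$, and $\pi_n(t\mid X,\mathbf y)\propto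 \ell(t)\pi(t)$. *)

theory Defs
  imports "HOL-Analysis.Analysis"
begin

definition pd1 :: "(real \<Rightarrow> real \<Rightarrow> real) \<Rightarrow> real \<Rightarrow> real \<Rightarrow> real" where
  "pd1 K x x' = (THE D. ((\<lambda>s. K s x') has_real_derivative D) (at x within {0..1}))"

definition pd2 :: "(real \<Rightarrow> real \<Rightarrow> real) \<Rightarrow> real \<Rightarrow> real \<Rightarrow> real" where
  "pd2 K x x' = (THE D. ((\<lambda>s. K x s) has_real_derivative D) (at x' within {0..1}))"

abbreviation K10 where "K10 K \<equiv> pd1 K"
abbreviation K01 where "K01 K \<equiv> pd2 K"
abbreviation K11 where "K11 K \<equiv> pd2 (pd1 K)"

definition partials_exist_on_square :: "(real \<Rightarrow> real \<Rightarrow> real) \<Rightarrow> bool" where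
  "partials_exist_on_square F \<longleftrightarrow>
     (\<forall>x\<in>{0..1}. \<forall>x'\<in>{0..1}.
        ((\<lambda>s. F s x') has_real_derivative pd1 F x x') (at x within {0..1}) \<and>
        ((\<lambda>s. F x s) has_real_derivative pd2 F x x') (at x' within {0..1}))"

definition cont_on_square :: "(real \<Rightarrow> real \<Rightarrow> real) \<Rightarrow> bool" where
  "cont_on_square F \<longleftrightarrow> continuous_on ({0..1} \<times> {0..1}) (\<lambda>(x, x'). F x x')"

definition C2_square :: "(real \<Rightarrow> real \<Rightarrow> real) \<Rightarrow> bool" where
  "C2_square K \<longleftrightarrow>
     partials_exist_on_square K \<and> partials_exist_on_square (pd1 K) \<and>
     partials_exist_on_square (pd2 K) \<and>
     cont_on_square K \<and> cont_on_square (pd1 K) \<and> cont_on_square (pd2 K) \<and>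
     cont_on_square (pd1 (pd1 K)) \<and> cont_on_square (pd2 (pd1 K)) \<and>
     cont_on_square (pd1 (pd2 K)) \<and> cont_on_square (pd2 (pd2 K))"

definition symmetric_kernel :: "(real \<Rightarrow> real \<Rightarrow> real) \<Rightarrow> bool" where
  "symmetric_kernel K \<longleftrightarrow> (\<forall>x\<in>{0..1}. \<forall>x'\<in>{0..1}. K x x' = K x' x)"

text \<open>Positive definite kernel (in the RKHS sense): every Gram matrix on [0,1]
 is positive semidefinite.\<close>
definition pos_def_kernel :: "(real \<Rightarrow> real \<Rightarrow> real) \<Rightarrow> bool" where
  "pos_def_kernel K \<longleftrightarrow>
     (\<forall>(m::nat) (p::nat \<Rightarrow> real) (c::nat \<Rightarrow> real). (\<forall>i<m. p i \<in> {0..1}) \<longrightarrow>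
        0 \<le> (\<Sum>i<m. \<Sum>j<m. c i * c j * K (p i) (p j)))"

definition gram :: "(real \<Rightarrow> real \<Rightarrow> real) \<Rightarrow> real^'n \<Rightarrow> real^'n^'n" where
  "gram K X = (\<chi> i j. K (X$i) (X$j))"

definition regmat :: "(real \<Rightarrow> real \<Rightarrow> real) \<Rightarrow> real \<Rightarrow> real^'n \<Rightarrow> real^'n^'n" where
  "regmat K lam X = gram K X + (real CARD('n) * lam) *\<^sub>R mat 1"

definition K10_vec :: "(real \<Rightarrow> real \<Rightarrow> real) \<Rightarrow> real \<Rightarrow> real^'n \<Rightarrow> real^'n" where
  "K10_vec K x X = (\<chi> i. K10 K x (X$i))"

definition mu_hat :: "(real \<Rightarrow> real \<Rightarrow> real) \<Rightarrow> real \<Rightarrow> real^'n \<Rightarrow> real^'n \<Rightarrow> real \<Rightarrow> real" where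
  "mu_hat K lam X y x = K10_vec K x X \<bullet> (matrix_inv (regmat K lam X) *v y)"

definition sigma2_hat :: "(real \<Rightarrow> real \<Rightarrow> real) \<Rightarrow> real \<Rightarrow> real \<Rightarrow> real^'n \<Rightarrow> real \<Rightarrow> real" where
  "sigma2_hat K \<sigma> lam X x = \<sigma>\<^sup>2 / (real CARD('n) * lam) *
      (K11 K x x - K10_vec K x X \<bullet> (matrix_inv (regmat K lam X) *v K10_vec K x X))"

text \<open>Marginal covariance Sigma_t of y given X and t.\<close>
definition Sigma_t :: "(real \<Rightarrow> real \<Rightarrow> real) \<Rightarrow> real \<Rightarrow> real \<Rightarrow> real^'n \<Rightarrow> real \<Rightarrow> real^'n^'n" where
  "Sigma_t K \<sigma> lam X t = (\<chi> i j. \<sigma>\<^sup>2 / (real CARD('n) * lam) *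
       (K (X$i) (X$j) - K01 K (X$i) t * K10 K t (X$j) / K11 K t t)
       + (if i = j then \<sigma>\<^sup>2 else 0))"

definition mvn_density :: "real^'n^'n \<Rightarrow> real^'n \<Rightarrow> real" where
  "mvn_density S y = exp (- (y \<bullet> (matrix_inv S *v y)) / 2) / sqrt ((2 * pi) ^ CARD('n) * det S)"

definition marg_lik :: "(real \<Rightarrow> real \<Rightarrow> real) \<Rightarrow> real \<Rightarrow> real \<Rightarrow> real^'n \<Rightarrow> real^'n \<Rightarrow> real \<Rightarrow> real" where
  "marg_lik K \<sigma> lam X y t = mvn_density (Sigma_t K \<sigma> lam X t) y"

definition posterior :: "(real \<Rightarrow> real \<Rightarrow> real) \<Rightarrow> real \<Rightarrow> real \<Rightarrow> real^'n \<Rightarrow> real^'n \<Rightarrow> (real \<Rightarrow> real) \<Rightarrow> real \<Rightarrow> real" where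
  "posterior K \<sigma> lam X y \<pi> t =
     marg_lik K \<sigma> lam X y t * \<pi> t / integral {0..1} (\<lambda>s. marg_lik K \<sigma> lam X y s * \<pi> s)"

end

theory Submission
  imports Defs
begin

text \<open>Write \<open>A = K(X,X) + n\<lambda> I\<close>, \<open>a = \<sigma>\<^sup>2/(n\<lambda>)\<close>, \<open>k = K\<^sub>0\<^sub>1(X,t)\<close> and \<open>c = K\<^sub>1\<^sub>1(t,t)\<close>.
  Conditioning on \<open>f'(t) = 0\<close> turns the marginal covariance \<open>a A\<close> of \<open>y\<close> into the rank-one
  downdate \<open>\<Sigma>\<^sub>t = a (A - k k\<^sup>T / c)\<close>. By the matrix determinant lemma and the Sherman-Morrison
  formula, with \<open>q = k\<^sup>T A\<^sup>-\<^sup>1 k\<close> and \<open>m = k\<^sup>T A\<^sup>-\<^sup>1 y\<close>,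
  \<open>det \<Sigma>\<^sub>t = a\<^sup>n det A (c - q)/c\<close> and \<open>y\<^sup>T \<Sigma>\<^sub>t\<^sup>-\<^sup>1 y = (y\<^sup>T A\<^sup>-\<^sup>1 y + m\<^sup>2/(c - q))/a\<close>,
  so the \<open>N(0, \<Sigma>\<^sub>t)\<close> density is the \<open>t\<close>-free density of \<open>N(0, a A)\<close> times
  \<open>sqrt (c/(c - q)) exp (-m\<^sup>2/(2a(c - q)))\<close>. Since \<open>\<sigma>\<^sup>2\<^sub>f\<^sub>'(t) = a (c - q)\<close> and
  \<open>\<mu>\<^sub>f\<^sub>'(t) = m\<close>, this is the claimed form; positive definiteness of \<open>A\<close> gives \<open>q \<ge> 0\<close>,
  hence \<open>c > 0\<close>, and a positive constant.\<close>

definition outer :: "real^'m \<Rightarrow> real^'n \<Rightarrow> real^'n^'m" where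
  "outer u v = (\<chi> i j. u$i * v$j)"

lemma outer_mult_vec: "outer u v *v x = (v \<bullet> x) *\<^sub>R u"
  by (simp add: outer_def vec_eq_iff matrix_vector_mult_def inner_vec_def sum_distrib_left mult_ac)

lemma matrix_mult_outer: "(A::real^'m^'k) ** outer u v = outer (A *v u) v"
  by (simp add: outer_def vec_eq_iff matrix_matrix_mult_def matrix_vector_mult_def
      sum_distrib_right mult.assoc)

lemma det_scaleR: "det (a *\<^sub>R (A::real^'n^'n)) = a ^ CARD('n) * det A"
proof -
  have "a *\<^sub>R A = (\<chi> i. a *s A$i)" by (auto simp: vec_eq_iff)
  then show ?thesis using det_rows_mul[of "\<lambda>i. a" "\<lambda>i. A$i"] by simp
qed

lemma det_replace_row_id: "det (\<chi> i. if i = k then (v::real^'n) else axis i 1) = v$k"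
proof -
  have row_id: "row i (mat 1 :: real^'n^'n) = axis i 1" for i
    by (auto simp: row_def mat_def axis_def vec_eq_iff)
  have sum_axis: "(\<Sum>i\<in>UNIV. v$i *s axis i 1) = v"
    by (auto simp: vec_eq_iff sum_component axis_def if_distrib cong: if_cong)
  show ?thesis
    using cramer_lemma_transpose[where A="mat 1" and x=v and k=k] unfolding row_id sum_axis by simp
qed

lemma det_replace_row_perturbed_id:
  fixes v :: "real^'n"
  assumes "finite T" "k \<notin> T"
  shows "det (\<chi> i. if i = k then v else if i \<in> T then axis i 1 + c i *s v else axis i 1) = v$k"
  using assms
proof (induction T rule: finite_induct)
  case empty
  show ?case by (simp only: empty_iff if_False det_replace_row_id)
next
  case (insert j T)
  define A where "A = (\<chi> i. if i = k then v else if i \<in> T then axis i 1 + c i *s v else axis i 1)"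
  have "j \<noteq> k" using insert by auto
  have row_A: "row m A = (if m = k then v else if m \<in> T then axis m 1 + c m *s v else axis m 1)" for m
    by (simp add: A_def row_def vec_lambda_eta)
  have "c j *s v \<in> vec.span {row m A |m. m \<noteq> j}"
    using \<open>j \<noteq> k\<close> row_A[of k] by (metis (mono_tags, lifting) mem_Collect_eq vec.span_base vec.span_scale)
  moreover have "(\<chi> i. if i = k then v else if i \<in> insert j T then axis i 1 + c i *s v else axis i 1)
      = (\<chi> m. if m = j then row j A + c j *s v else row m A)"
    using insert \<open>j \<noteq> k\<close> by (auto simp: row_A vec_eq_iff)
  ultimately show ?case using insert by (simp add: det_row_span A_def)
qed

lemma det_perturbed_id:
  fixes v :: "real^'n"
  assumes "finite T"
  shows "det (\<chi> i. if i \<in> T then axis i 1 + c i *s v else axis i 1) = 1 + (\<Sum>i\<in>T. c i * v$i)"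
  using assms
proof (induction T rule: finite_induct)
  case empty
  have "(\<chi> i. axis i (1::real)) = (mat 1 :: real^'n^'n)"
    by (auto simp: vec_eq_iff axis_def mat_def)
  then show ?case by simp
next
  case (insert k T)
  define B where "B = (\<lambda>i. if i \<in> T then axis i 1 + c i *s v else axis i (1::real))"
  have "(\<chi> i. if i \<in> insert k T then axis i 1 + c i *s v else axis i 1)
      = (\<chi> i. if i = k then axis k 1 + c k *s v else B i)"
    by (auto simp: B_def vec_eq_iff)
  moreover have "(\<chi> i. if i = k then axis k 1 else B i) = (\<chi> i. if i \<in> T then axis i 1 + c i *s v else axis i 1)"
    using insert(2) by (auto simp: B_def vec_eq_iff)
  moreover have "(\<chi> i. if i = k then v else B i)
      = (\<chi> i. if i = k then v else if i \<in> T then axis i 1 + c i *s v else axis i 1)"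
    by (auto simp: B_def vec_eq_iff)
  ultimately show ?case
    using insert det_replace_row_perturbed_id[OF insert(1,2), of v c]
      det_row_add[of k "\<lambda>i. axis k 1" "\<lambda>i. c k *s v" B] det_row_mul[of k "c k" "\<lambda>i. v" B]
    by simp
qed

lemma det_mat1_plus_outer: "det (mat 1 + outer w v) = 1 + v \<bullet> (w::real^'n)"
proof -
  have "mat 1 + outer w v = (\<chi> i. if i \<in> UNIV then axis i 1 + w$i *s v else axis i 1)"
    by (auto simp: vec_eq_iff axis_def mat_def outer_def)
  then show ?thesis using det_perturbed_id[of UNIV "\<lambda>i. w$i" v]
    by (simp add: inner_vec_def mult.commute)
qed

lemma matrix_mul_matrix_inv:
  assumes "invertible (A::real^'n^'n)"
  shows "A ** matrix_inv A = mat 1" and "matrix_inv A ** A = mat 1"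
proof -
  from assms obtain B where "A ** B = mat 1 \<and> B ** A = mat 1" unfolding invertible_def by blast
  then have "A ** matrix_inv A = mat 1 \<and> matrix_inv A ** A = mat 1"
    unfolding matrix_inv_def by (rule someI)
  then show "A ** matrix_inv A = mat 1" "matrix_inv A ** A = mat 1" by auto
qed

lemma matrix_inv_mult_vec_cancel:
  assumes "invertible (A::real^'n^'n)"
  shows "A *v (matrix_inv A *v x) = x" and "matrix_inv A *v (A *v x) = x"
  using matrix_mul_matrix_inv[OF assms] by (simp_all add: matrix_vector_mul_assoc)

lemma matrix_inv_mult_vec_eqI:
  assumes "invertible (A::real^'n^'n)" "A *v x = y"
  shows "matrix_inv A *v y = x"
  using matrix_inv_mult_vec_cancel(2)[OF assms(1), of x] assms(2) by simp

lemma matrix_inv_scaleR_mult_vec: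
  assumes "invertible (A::real^'n^'n)" "a \<noteq> 0"
  shows "matrix_inv (a *\<^sub>R A) *v y = (1 / a) *\<^sub>R (matrix_inv A *v y)"
proof -
  have inv: "invertible (a *\<^sub>R A)"
    using assms by (simp add: invertible_det_nz det_scaleR)
  show "matrix_inv (a *\<^sub>R A) *v y = (1 / a) *\<^sub>R (matrix_inv A *v y)"
    using assms by (intro matrix_inv_mult_vec_eqI[OF inv])
      (simp add: matrix_vector_mult_scaleR matrix_inv_mult_vec_cancel flip: scaleR_matrix_vector_assoc)
qed

lemma inner_matrix_inv_commute:
  assumes "invertible (A::real^'n^'n)" "transpose A = A"
  shows "u \<bullet> (matrix_inv A *v v) = v \<bullet> (matrix_inv A *v u)"
proof -
  have "(A *v p) \<bullet> r = p \<bullet> (A *v r)" for p r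
    by (metis assms(2) dot_lmul_matrix transpose_matrix_vector)
  from this[of "matrix_inv A *v u" "matrix_inv A *v v"] show ?thesis
    by (simp add: matrix_inv_mult_vec_cancel[OF assms(1)] inner_commute)
qed

lemma matrix_determinant_lemma:
  assumes "invertible (A::real^'n^'n)"
  shows "det (A + outer u v) = det A * (1 + v \<bullet> (matrix_inv A *v u))"
proof -
  have "A + outer u v = A ** (mat 1 + outer (matrix_inv A *v u) v)"
    by (simp add: matrix_add_ldistrib matrix_mult_outer matrix_inv_mult_vec_cancel[OF assms])
  then show ?thesis by (simp add: det_mul det_mat1_plus_outer)
qed

lemma sherman_morrison_mult_vec:
  fixes A :: "real^'n^'n"
  assumes "invertible A" and nz: "1 + v \<bullet> (matrix_inv A *v u) \<noteq> 0"
  shows "invertible (A + outer u v)"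
    and "matrix_inv (A + outer u v) *v y =
           matrix_inv A *v y - ((v \<bullet> (matrix_inv A *v y)) / (1 + v \<bullet> (matrix_inv A *v u))) *\<^sub>R (matrix_inv A *v u)"
proof -
  show inv: "invertible (A + outer u v)"
    using assms by (simp add: invertible_det_nz matrix_determinant_lemma)
  define w where "w = matrix_inv A *v u"
  define \<beta> where "\<beta> = (v \<bullet> (matrix_inv A *v y)) / (1 + v \<bullet> w)"
  have "(A + outer u v) *v (matrix_inv A *v y - \<beta> *\<^sub>R w)
      = y + (v \<bullet> (matrix_inv A *v y) - \<beta> * (1 + v \<bullet> w)) *\<^sub>R u"
    by (simp add: w_def matrix_vector_mult_add_rdistrib outer_mult_vec matrix_vector_mult_scaleR
        matrix_vector_mult_diff_distrib matrix_inv_mult_vec_cancel[OF assms(1)] inner_diff_right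
        algebra_simps)
  also have "\<dots> = y"
    using nz by (simp add: \<beta>_def w_def)
  finally show "matrix_inv (A + outer u v) *v y = matrix_inv A *v y - \<beta> *\<^sub>R w"
    by (rule matrix_inv_mult_vec_eqI[OF inv])
qed

definition pos_def_matrix :: "real^'n^'n \<Rightarrow> bool" where
  "pos_def_matrix A \<longleftrightarrow> (\<forall>x. x \<noteq> 0 \<longrightarrow> 0 < x \<bullet> (A *v x))"

lemma pos_def_matrix_quad_nonneg: "pos_def_matrix A \<Longrightarrow> 0 \<le> x \<bullet> (A *v x)"
  unfolding pos_def_matrix_def by (cases "x = 0") (auto intro: less_imp_le)

lemma pos_def_matrix_invertible:
  assumes "pos_def_matrix A"
  shows "invertible A"
proof -
  have "inj ((*v) A)"
    using assms unfolding vec.inj_iff_eq_0 pos_def_matrix_def by fastforce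
  then show ?thesis by (simp add: invertible_left_inverse matrix_left_invertible_injective)
qed

lemma pos_def_matrix_inv_quad_nonneg:
  assumes "pos_def_matrix A"
  shows "0 \<le> x \<bullet> (matrix_inv A *v x)"
  using pos_def_matrix_quad_nonneg[OF assms, of "matrix_inv A *v x"]
  by (simp add: matrix_inv_mult_vec_cancel[OF pos_def_matrix_invertible[OF assms]] inner_commute)

lemma pos_def_matrix_convex_id:
  fixes A :: "real^'n^'n"
  assumes "pos_def_matrix A" "0 \<le> s" "s \<le> 1"
  shows "pos_def_matrix (s *\<^sub>R A + (1 - s) *\<^sub>R mat 1)"
  unfolding pos_def_matrix_def
proof (intro allI impI)
  fix x :: "real^'n" assume "x \<noteq> 0"
  then have "0 < x \<bullet> (A *v x)" "0 < x \<bullet> x"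
    using assms(1) by (auto simp: pos_def_matrix_def)
  moreover have "x \<bullet> ((s *\<^sub>R A + (1 - s) *\<^sub>R mat 1) *v x) = s * (x \<bullet> (A *v x)) + (1 - s) * (x \<bullet> x)"
    by (simp add: matrix_vector_mult_add_rdistrib inner_add_right flip: scaleR_matrix_vector_assoc)
  ultimately show "0 < x \<bullet> ((s *\<^sub>R A + (1 - s) *\<^sub>R mat 1) *v x)"
    using assms(2,3) by (cases "s = 1") (auto intro!: add_pos_nonneg add_nonneg_pos)
qed

lemma pos_def_matrix_det_pos:
  fixes A :: "real^'n^'n"
  assumes "pos_def_matrix A"
  shows "0 < det A"
proof (rule ccontr)
  assume "\<not> 0 < det A"
  define f where "f s = det (s *\<^sub>R A + (1 - s) *\<^sub>R mat 1)" for s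
  have "continuous_on {0..1} f"
    unfolding f_def det_def by (intro continuous_intros)
  moreover have "f 0 = 1" "f 1 \<le> 0"
    using \<open>\<not> 0 < det A\<close> by (simp_all add: f_def)
  ultimately obtain s where "0 \<le> s" "s \<le> 1" "f s = 0"
    using IVT2'[of f 1 0 0] by auto
  then show False
    using pos_def_matrix_convex_id[OF assms] pos_def_matrix_invertible invertible_det_nz
    by (auto simp: f_def)
qed

lemma mvn_density_scaleR:
  assumes "invertible (A::real^'n^'n)" "a \<noteq> 0"
  shows "mvn_density (a *\<^sub>R A) y =
           exp (- (y \<bullet> (matrix_inv A *v y)) / (2 * a)) / sqrt ((2 * pi) ^ CARD('n) * a ^ CARD('n) * det A)"
  using assms by (simp add: mvn_density_def matrix_inv_scaleR_mult_vec det_scaleR mult.assoc)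

lemma mvn_density_rank_one_downdate:
  fixes A :: "real^'n^'n" and k y :: "real^'n"
  defines "q \<equiv> k \<bullet> (matrix_inv A *v k)" and "m \<equiv> k \<bullet> (matrix_inv A *v y)"
  assumes inv: "invertible A" and symm: "transpose A = A" and "a \<noteq> 0" "c \<noteq> 0" "q \<noteq> c"
  shows "mvn_density (a *\<^sub>R (A - (1 / c) *\<^sub>R outer k k)) y =
           mvn_density (a *\<^sub>R A) y * sqrt (c / (c - q)) * exp (- m\<^sup>2 / (2 * a * (c - q)))"
proof -
  define u where "u = (- 1 / c) *\<^sub>R k"
  have M: "A - (1 / c) *\<^sub>R outer k k = A + outer u k"
    by (simp add: u_def outer_def vec_eq_iff)
  have nz: "1 + k \<bullet> (matrix_inv A *v u) = (c - q) / c"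
    using \<open>c \<noteq> 0\<close> unfolding u_def q_def matrix_vector_mult_scaleR by (simp add: field_simps)
  with \<open>q \<noteq> c\<close> \<open>c \<noteq> 0\<close> have nz0: "1 + k \<bullet> (matrix_inv A *v u) \<noteq> 0" by simp
  have det_M: "det (A + outer u k) = det A * ((c - q) / c)"
    by (simp add: matrix_determinant_lemma[OF inv] nz)
  have "y \<bullet> (matrix_inv (A + outer u k) *v y)
      = y \<bullet> (matrix_inv A *v y) + (m / (c - q)) * (y \<bullet> (matrix_inv A *v k))"
    using \<open>c \<noteq> 0\<close> \<open>q \<noteq> c\<close>
    unfolding sherman_morrison_mult_vec(2)[OF inv nz0] nz
    unfolding u_def matrix_vector_mult_scaleR
    by (simp add: m_def inner_diff_right inner_add_right field_simps)
  also have "\<dots> = y \<bullet> (matrix_inv A *v y) + m\<^sup>2 / (c - q)"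
    by (simp add: m_def inner_matrix_inv_commute[OF inv symm, of y k] power2_eq_square)
  finally have quad_M: "y \<bullet> (matrix_inv (A + outer u k) *v y) = y \<bullet> (matrix_inv A *v y) + m\<^sup>2 / (c - q)" .
  have sqrt_det_M: "sqrt ((2 * pi) ^ CARD('n) * a ^ CARD('n) * det (A + outer u k))
      = sqrt ((2 * pi) ^ CARD('n) * a ^ CARD('n) * det A) * sqrt ((c - q) / c)"
    by (simp only: det_M mult.assoc[symmetric] real_sqrt_mult)
  have exponent: "- (y \<bullet> (matrix_inv A *v y) + m\<^sup>2 / (c - q)) / (2 * a)
      = - (y \<bullet> (matrix_inv A *v y)) / (2 * a) + - m\<^sup>2 / (2 * a * (c - q))"
    using \<open>a \<noteq> 0\<close> \<open>q \<noteq> c\<close> by (simp add: field_simps)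
  have "mvn_density (a *\<^sub>R (A + outer u k)) y
      = exp (- (y \<bullet> (matrix_inv A *v y)) / (2 * a) + - m\<^sup>2 / (2 * a * (c - q)))
        / (sqrt ((2 * pi) ^ CARD('n) * a ^ CARD('n) * det A) * sqrt ((c - q) / c))"
    unfolding mvn_density_scaleR[OF sherman_morrison_mult_vec(1)[OF inv nz0] \<open>a \<noteq> 0\<close>]
    by (simp only: quad_M exponent sqrt_det_M)
  also have "\<dots> = mvn_density (a *\<^sub>R A) y * (1 / sqrt ((c - q) / c)) * exp (- m\<^sup>2 / (2 * a * (c - q)))"
    unfolding exp_add mvn_density_scaleR[OF inv \<open>a \<noteq> 0\<close>] by simp
  finally show ?thesis
    by (simp add: M real_sqrt_divide)
qed

lemma pd2_eq_pd1_swap: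
  assumes "symmetric_kernel K" "x \<in> {0..1}" "t \<in> {0..1}"
  shows "pd2 K x t = pd1 K t x"
proof -
  have "((\<lambda>s. K x s) has_real_derivative D) (at t within {0..1}) \<longleftrightarrow>
        ((\<lambda>s. K s x) has_real_derivative D) (at t within {0..1})" for D
    using assms unfolding symmetric_kernel_def
    by (intro has_field_derivative_cong_ev) (auto intro: always_eventually)
  then show ?thesis unfolding pd1_def pd2_def by simp
qed

lemma gram_quad_nonneg:
  fixes X :: "real^'n"
  assumes "\<forall>i. X$i \<in> {0..1}" "pos_def_kernel K"
  shows "0 \<le> x \<bullet> (gram K X *v x)"
proof -
  obtain h where h: "bij_betw h {..<CARD('n)} (UNIV::'n set)"
    using ex_bij_betw_nat_finite[of "UNIV::'n set"] by (auto simp: lessThan_atLeast0)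
  define F where "F i j = x$i * x$j * K (X$i) (X$j)" for i j
  have "x \<bullet> (gram K X *v x) = (\<Sum>i\<in>UNIV. \<Sum>j\<in>UNIV. F i j)"
    by (simp add: F_def inner_vec_def gram_def matrix_vector_mult_def sum_distrib_left mult_ac)
  also have "\<dots> = (\<Sum>i<CARD('n). \<Sum>j<CARD('n). F (h i) (h j))"
    by (simp add: sum.reindex_bij_betw[OF h] sum.reindex_bij_betw[OF h, where g="\<lambda>i. \<Sum>j\<in>UNIV. F i j"])
  also have "0 \<le> \<dots>"
    using assms unfolding pos_def_kernel_def F_def by auto
  finally show ?thesis .
qed

lemma regmat_pos_def:
  fixes X :: "real^'n"
  assumes "\<forall>i. X$i \<in> {0..1}" "pos_def_kernel K" "lam > 0"
  shows "pos_def_matrix (regmat K lam X)"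
  unfolding pos_def_matrix_def
proof (intro allI impI)
  fix x :: "real^'n" assume "x \<noteq> 0"
  have "x \<bullet> (regmat K lam X *v x) = x \<bullet> (gram K X *v x) + (real CARD('n) * lam) * (x \<bullet> x)"
    by (simp add: regmat_def matrix_vector_mult_add_rdistrib inner_add_right
        flip: scaleR_matrix_vector_assoc)
  moreover have "0 < (real CARD('n) * lam) * (x \<bullet> x)"
    using assms(3) \<open>x \<noteq> 0\<close> by simp
  ultimately show "0 < x \<bullet> (regmat K lam X *v x)"
    using gram_quad_nonneg[OF assms(1,2), of x] by linarith
qed

lemma transpose_regmat:
  fixes X :: "real^'n"
  assumes "\<forall>i. X$i \<in> {0..1}" "symmetric_kernel K"
  shows "transpose (regmat K lam X) = regmat K lam X"
  using assms
  by (auto simp: vec_eq_iff transpose_def regmat_def gram_def symmetric_kernel_def mat_def)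

lemma Sigma_t_eq_downdate:
  fixes X :: "real^'n"
  assumes "\<forall>i. X$i \<in> {0..1}" "symmetric_kernel K" "t \<in> {0..1}" "lam \<noteq> 0"
  shows "Sigma_t K \<sigma> lam X t = (\<sigma>\<^sup>2 / (real CARD('n) * lam)) *\<^sub>R
           (regmat K lam X - (1 / K11 K t t) *\<^sub>R outer (K10_vec K t X) (K10_vec K t X))"
proof -
  have "K01 K (X$i) t = K10 K t (X$i)" for i
    using pd2_eq_pd1_swap assms(1-3) by blast
  then show ?thesis
    using assms(4)
    by (auto simp: vec_eq_iff Sigma_t_def regmat_def gram_def mat_def outer_def K10_vec_def
        field_simps)
qed

lemma marg_lik_eq:
  fixes X y :: "real^'n" and \<sigma> lam :: real
  defines "a \<equiv> \<sigma>\<^sup>2 / (real CARD('n) * lam)"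
  assumes "\<sigma> > 0" "lam > 0" "\<forall>i. X$i \<in> {0..1}" "symmetric_kernel K" "pos_def_kernel K"
    and "t \<in> {0..1}" "sigma2_hat K \<sigma> lam X t > 0"
  shows "marg_lik K \<sigma> lam X y t =
           mvn_density (a *\<^sub>R regmat K lam X) y * sqrt a *
           (1 / sqrt (sigma2_hat K \<sigma> lam X t / K11 K t t)) *
           exp (- (mu_hat K lam X y t)\<^sup>2 / (2 * sigma2_hat K \<sigma> lam X t))"
proof -
  define A where "A = regmat K lam X"
  define k where "k = K10_vec K t X"
  define c where "c = K11 K t t"
  define q where "q = k \<bullet> (matrix_inv A *v k)"
  have "a > 0" using assms(2,3) by (simp add: a_def)
  have pd: "pos_def_matrix A" unfolding A_def by (rule regmat_pos_def[OF assms(4,6,3)])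
  have sigma2: "sigma2_hat K \<sigma> lam X t = a * (c - q)"
    by (simp add: sigma2_hat_def a_def A_def k_def c_def q_def)
  have "q < c"
    using assms(8) \<open>a > 0\<close> by (simp add: sigma2 zero_less_mult_iff)
  moreover have "0 \<le> q"
    unfolding q_def by (rule pos_def_matrix_inv_quad_nonneg[OF pd])
  ultimately have "0 < c" by linarith
  have "marg_lik K \<sigma> lam X y t = mvn_density (a *\<^sub>R (A - (1 / c) *\<^sub>R outer k k)) y"
    unfolding marg_lik_def A_def c_def k_def a_def
    using Sigma_t_eq_downdate[OF assms(4,5,7)] assms(3) by simp
  also have "\<dots> = mvn_density (a *\<^sub>R A) y * sqrt (c / (c - q)) *
                    exp (- (k \<bullet> (matrix_inv A *v y))\<^sup>2 / (2 * a * (c - q)))"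
    unfolding q_def
    by (rule mvn_density_rank_one_downdate)
      (use pd \<open>a > 0\<close> \<open>0 < c\<close> \<open>q < c\<close> transpose_regmat[OF assms(4,5)] in
        \<open>auto simp: pos_def_matrix_invertible A_def q_def\<close>)
  finally have "marg_lik K \<sigma> lam X y t = mvn_density (a *\<^sub>R A) y * sqrt (c / (c - q)) *
                 exp (- (mu_hat K lam X y t)\<^sup>2 / (2 * a * (c - q)))"
    by (simp add: mu_hat_def A_def k_def)
  moreover have "sqrt (c / (c - q)) = sqrt a * (1 / sqrt (a * (c - q) / c))"
    using \<open>a > 0\<close> by (simp add: real_sqrt_divide real_sqrt_mult)
  ultimately show ?thesis
    by (simp add: sigma2 A_def c_def mult.assoc)
qed

theorem proposition1:
  fixes K :: "real \<Rightarrow> real \<Rightarrow> real"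
    and \<sigma> lam :: real
    and X y :: "real^'n"
    and \<pi> :: "real \<Rightarrow> real"
  assumes "\<sigma> > 0" and "lam > 0"
    and "\<forall>i. X$i \<in> {0..1}"
    and "symmetric_kernel K" and "pos_def_kernel K" and "C2_square K"
    and "\<forall>x\<in>{0..1}. sigma2_hat K \<sigma> lam X x > 0"
    and "\<forall>t\<in>{0..1}. \<pi> t \<ge> 0" and "(\<pi> has_integral 1) {0..1}"
  shows "(\<exists>C>0. \<forall>t\<in>{0..1}. marg_lik K \<sigma> lam X y t =
            C * (1 / sqrt (sigma2_hat K \<sigma> lam X t / K11 K t t)) *
              exp (- (mu_hat K lam X y t)\<^sup>2 / (2 * sigma2_hat K \<sigma> lam X t)))
       \<and> (\<exists>C. \<forall>t\<in>{0..1}. posterior K \<sigma> lam X y \<pi> t =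
            C * (1 / sqrt (sigma2_hat K \<sigma> lam X t / K11 K t t)) *
              exp (- (mu_hat K lam X y t)\<^sup>2 / (2 * sigma2_hat K \<sigma> lam X t)) * \<pi> t)"
proof -
  define a where "a = \<sigma>\<^sup>2 / (real CARD('n) * lam)"
  define C where "C = mvn_density (a *\<^sub>R regmat K lam X) y * sqrt a"
  define I where "I = integral {0..1} (\<lambda>s. marg_lik K \<sigma> lam X y s * \<pi> s)"
  have lik: "marg_lik K \<sigma> lam X y t =
            C * (1 / sqrt (sigma2_hat K \<sigma> lam X t / K11 K t t)) *
              exp (- (mu_hat K lam X y t)\<^sup>2 / (2 * sigma2_hat K \<sigma> lam X t))"
    if "t \<in> {0..1}" for t
    using marg_lik_eq[OF assms(1-5) that] assms(7) that by (simp add: C_def a_def)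
  have "a > 0" using assms(1,2) by (simp add: a_def)
  then have "0 < det (a *\<^sub>R regmat K lam X)"
    using pos_def_matrix_det_pos[OF regmat_pos_def[OF assms(3,5,2)]] by (simp add: det_scaleR)
  with \<open>a > 0\<close> have "C > 0" by (simp add: C_def mvn_density_def)
  \<comment> \<open>No positivity of \<open>I\<close> is needed: if \<open>I = 0\<close>, both sides vanish because \<open>x / 0 = 0\<close>.\<close>
  have post: "posterior K \<sigma> lam X y \<pi> t =
          (C / I) * (1 / sqrt (sigma2_hat K \<sigma> lam X t / K11 K t t)) *
            exp (- (mu_hat K lam X y t)\<^sup>2 / (2 * sigma2_hat K \<sigma> lam X t)) * \<pi> t"
    if "t \<in> {0..1}" for t
    unfolding posterior_def I_def[symmetric] lik[OF that] by simp
  show ?thesis using \<open>C > 0\<close> lik post by blast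
qed

end
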